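(* Let $k\ge 2$, $n=2^k$, and run Jakobsson's pebble-update procedure for $n/2$ steps. Then the only pebble discarded during these $n/2$ steps is the pebble with initial label $k-1$ (initially at position $n/2$); in particular the pebble with initial label $k$ (at the seed position $n$) and all pebbles with initial labels $j\le k-2$ are not discarded.
   Context: Jakobsson's pebble-update procedure (hash-chain preimage traversal). Fix $k\ge 1$ and $n=2^k$. There are $k$ pebbles, identified by their initial label $j\in\{1,\dots,k\}$. Pebble $j$ has two fixed constants $S_j=3\cdot 2^j$ (start increment) and $D_j=2^{j+1}$ (destination increment), and two integer fields $\mathrm{Position}$ and $\mathrm{Destination}$ (which may be set to $+\infty$). Initially $\mathrm{Position}=\mathrm{Destination}=2^j$ for pebble $j$, and a counter $c$ equals $0$. The pebbles are kept sorted by $\mathrm{Position}$, and "the first pebble" means the pebble with the smallest $\mathrm{Position}$. One step: (i) if $c=n$, stop; otherwise $c\leftarrow c+1$; (ii) for every pebble with $\mathrm{Position}\ne\mathrm{Destination}$, set $\mathrm{Position}\leftarrow\mathrm{Position}-2$; (iii) if $c$ is even, the first pebble (say with initial label $j$) makes a backward move: $\mathrm{Position}\leftarrow \mathrm{Position}+S_j$, $\mathrm{Destination}\leftarrow\mathrm{Destination}+D_j$; if the new Destination exceeds $n$, both fields are set to $+\infty$ and the pebble is said to be discarded; then the pebbles are re-sorted by $\mathrm{Position}$. (Each pebble also stores a hash-chain value, which does not influence the evolution of the Position and Destination fields.) *)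

theory Defs
  imports Main
begin

text \<open>Pebbles are identified by their initial
label j in {1..k}. Position and Destination are of type int option, where None
stands for +infinity. A state is (c, pos, dest).\<close>

type_synonym pstate = "nat \<times> (nat \<Rightarrow> int option) \<times> (nat \<Rightarrow> int option)"

definition S_inc :: "nat \<Rightarrow> int" where "S_inc j = 3 * 2 ^ j"
definition D_inc :: "nat \<Rightarrow> int" where "D_inc j = 2 ^ (j + 1)"

definition pos_le :: "int option \<Rightarrow> int option \<Rightarrow> bool" where
  "pos_le x y = (case y of None \<Rightarrow> True
                  | Some b \<Rightarrow> (case x of None \<Rightarrow> False | Some a \<Rightarrow> a \<le> b))"

definition first_pebble :: "nat \<Rightarrow> (nat \<Rightarrow> int option) \<Rightarrow> nat" where
  "first_pebble k pos = (LEAST j. j \<in> {1..k} \<and> (\<forall>i\<in>{1..k}. pos_le (pos j) (pos i)))"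

definition init_state :: "nat \<Rightarrow> pstate" where
  "init_state k = (0, (\<lambda>j. Some (2 ^ j)), (\<lambda>j. Some (2 ^ j)))"

definition peb_step :: "nat \<Rightarrow> pstate \<Rightarrow> pstate" where
  "peb_step k s = (case s of (c, pos, dest) \<Rightarrow>
     if c = 2 ^ k then s else
     (let c' = c + 1;
          pos1 = (\<lambda>j. if pos j \<noteq> dest j then map_option (\<lambda>p. p - 2) (pos j) else pos j)
      in if even c' then
           (let j = first_pebble k pos1;
                np = map_option (\<lambda>p. p + S_inc j) (pos1 j);
                nd = map_option (\<lambda>d. d + D_inc j) (dest j)
            in (case nd of
                  Some d \<Rightarrow> if d > 2 ^ k
                            then (c', pos1(j := None), dest(j := None))
                            else (c', pos1(j := np), dest(j := nd))
                | None \<Rightarrow> (c', pos1(j := np), dest(j := nd))))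
         else (c', pos1, dest)))"

definition run :: "nat \<Rightarrow> nat \<Rightarrow> pstate" where
  "run k t = (peb_step k ^^ t) (init_state k)"

text \<open>Pebble j has been discarded by time t (discarded pebbles stay at +infinity).\<close>
definition discarded :: "nat \<Rightarrow> nat \<Rightarrow> nat \<Rightarrow> bool" where
  "discarded k t j = (snd (snd (run k t)) j = None)"

end

theory Submission
imports Defs
begin

(*
  Call m "j-aligned" if m is an odd multiple of 2^j.  During the first n/2 = 2^(k-1)
  steps the procedure has a closed form: at time c the Destination of pebble j is the
  least j-aligned number d > c, and its Position is max d (3 d - 2 c - 3 * 2^j), i.e.
  it walks down two units per step from d + 2^j until it reaches d.  At an even time m
  with m j-aligned, pebble j stands at m while every other pebble is strictly beyond m,
  so pebble j is the first pebble; its backward move sends it to m + S_j with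
  Destination m + D_j, the next j-aligned number.  At odd times nothing but walking
  happens.

  By induction the run follows the closed form up to time 2^(k-1) - 1, because
  a j-aligned time m < n/2 has j < k - 1 and so m + D_j <= n.  Time 2^(k-1) is
  (k-1)-aligned and 2^(k-1) + D_(k-1) > n, so exactly pebble k - 1 is discarded then.
*)

section \<open>Aligned numbers\<close>

text \<open>m is j-aligned iff m is an odd multiple of 2^j, i.e. 2^j is the lowest bit of m.\<close>
definition aligned :: "nat \<Rightarrow> nat \<Rightarrow> bool" where
  "aligned m j \<longleftrightarrow> (2::nat) ^ (j + 1) dvd m + 2 ^ j"

lemma aligned_0_iff_odd: "aligned m 0 \<longleftrightarrow> odd m"
  by (simp add: aligned_def)

text \<open>The alignment of a number is unique: two different exponents would force
  2^(j+1) to divide 2^j.\<close>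
lemma aligned_unique:
  assumes "aligned m j" "aligned m j'"
  shows "j = j'"
proof (rule ccontr)
  assume "j \<noteq> j'"
  then obtain a b where ab: "aligned m a" "aligned m b" "a < b"
    using assms by (metis linorder_neqE_nat)
  have "(2::nat) ^ (a + 1) dvd 2 ^ (b + 1)" "(2::nat) ^ (a + 1) dvd 2 ^ b"
    using ab(3) by (intro le_imp_power_dvd; simp)+
  with ab(2) have "(2::nat) ^ (a + 1) dvd m"
    unfolding aligned_def by (meson dvd_add_left_iff dvd_trans)
  with ab(1) have "(2::nat) ^ (a + 1) dvd 2 ^ a"
    unfolding aligned_def by (simp add: dvd_add_right_iff)
  then have "(2::nat) ^ (a + 1) \<le> 2 ^ a" by (rule dvd_imp_le) simp
  then show False by simp
qed

text \<open>Every positive number is aligned: halve it until it becomes odd.\<close>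
lemma aligned_exists: "m > 0 \<Longrightarrow> \<exists>j. aligned m j"
proof (induction m rule: less_induct)
  case (less m)
  show ?case
  proof (cases "even m")
    case False
    then show ?thesis using aligned_0_iff_odd by blast
  next
    case True
    then obtain h where m: "m = 2 * h" by blast
    with less.prems obtain j where "aligned h j"
      using less.IH by force
    then have "2 * (2::nat) ^ (j + 1) dvd 2 * (h + 2 ^ j)"
      unfolding aligned_def by (rule mult_dvd_mono[OF dvd_refl])
    then have "aligned m (j + 1)" by (simp add: aligned_def m)
    then show ?thesis by blast
  qed
qed

lemma aligned_le: "m > 0 \<Longrightarrow> aligned m j \<Longrightarrow> 2 ^ j \<le> m"
  using dvd_imp_le[of "(2::nat) ^ (j + 1)" "m + 2 ^ j"] by (simp add: aligned_def)

lemma residue_wraps_iff: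
  "Suc ((c + 2 ^ j) mod 2 ^ (j + 1)) = 2 ^ (j + 1) \<longleftrightarrow> aligned (Suc c) j"
proof -
  have "Suc ((c + 2 ^ j) mod 2 ^ (j + 1)) = 2 ^ (j + 1) \<longleftrightarrow> Suc (c + 2 ^ j) mod 2 ^ (j + 1) = 0"
    by (simp add: mod_Suc)
  then show ?thesis by (simp add: aligned_def dvd_eq_mod_eq_0)
qed

section \<open>Closed forms for Destination and Position\<close>

text \<open>At time c the Destination of pebble j \<ge> 1 is the least j-aligned number
  exceeding c; the fictitious pebble 0 stays at 1.\<close>
definition dest_at :: "nat \<Rightarrow> nat \<Rightarrow> int" where
  "dest_at c j = (if j = 0 then 1 else int c + 2 ^ (j + 1) - int ((c + 2 ^ j) mod 2 ^ (j + 1)))"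

text \<open>The Position walks down towards the Destination, starting 2^j above it.\<close>
definition pos_at :: "nat \<Rightarrow> nat \<Rightarrow> int" where
  "pos_at c j = (if j = 0 then 1 else max (dest_at c j) (3 * dest_at c j - 2 * int c - 3 * 2 ^ j))"

definition state_at :: "nat \<Rightarrow> pstate" where
  "state_at c = (c, \<lambda>j. Some (pos_at c j), \<lambda>j. Some (dest_at c j))"

lemma dest_at_gt:
  assumes "j \<noteq> 0"
  shows "dest_at c j > int c"
proof -
  have "(c + 2 ^ j) mod 2 ^ (j + 1) < (2::nat) ^ (j + 1)" by simp
  then have "int ((c + 2 ^ j) mod 2 ^ (j + 1)) < 2 ^ (j + 1)"
    by (metis of_nat_less_iff of_nat_numeral of_nat_power)
  then show ?thesis using assms by (simp add: dest_at_def)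
qed

lemma pos_at_ge_dest_at: "pos_at c j \<ge> dest_at c j"
  by (simp add: pos_at_def dest_at_def)

lemma dest_at_Suc_keep:
  "\<not> aligned (Suc c) j \<Longrightarrow> dest_at (Suc c) j = dest_at c j"
  using residue_wraps_iff[of c j] by (simp add: dest_at_def mod_Suc)

lemma dest_at_Suc_jump:
  assumes "j \<noteq> 0" "aligned (Suc c) j"
  shows "dest_at c j = int (Suc c)" "dest_at (Suc c) j = int (Suc c) + D_inc j"
proof -
  have wrap: "Suc ((c + 2 ^ j) mod 2 ^ (j + 1)) = 2 ^ (j + 1)"
    using assms(2) residue_wraps_iff by blast
  then have "int ((c + 2 ^ j) mod 2 ^ (j + 1)) = 2 ^ (j + 1) - 1"
    by (metis add_diff_cancel_left' of_nat_Suc of_nat_numeral of_nat_power plus_1_eq_Suc)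
  then show "dest_at c j = int (Suc c)" using assms(1) by (simp add: dest_at_def)
  have "(Suc c + 2 ^ j) mod 2 ^ (j + 1) = 0" using wrap by (simp add: mod_Suc)
  then show "dest_at (Suc c) j = int (Suc c) + D_inc j"
    using assms(1) by (simp add: dest_at_def D_inc_def)
qed

lemma dest_at_eq_Suc_imp_aligned:
  assumes "j \<noteq> 0" "dest_at c j = int (Suc c)"
  shows "aligned (Suc c) j"
proof -
  have "int (Suc ((c + 2 ^ j) mod 2 ^ (j + 1))) = int (2 ^ (j + 1))"
    using assms by (simp add: dest_at_def)
  then show ?thesis using residue_wraps_iff by (simp only: of_nat_eq_iff)
qed

text \<open>If c + 1 is not j-aligned the Position decreases by 2 unless it has already
  reached the Destination (the parity of 2^j makes it land exactly on it).\<close>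
lemma pos_at_Suc_keep:
  assumes "j \<noteq> 0" "\<not> aligned (Suc c) j"
  shows "pos_at (Suc c) j = (if pos_at c j \<noteq> dest_at c j then pos_at c j - 2 else pos_at c j)"
proof -
  obtain h :: int where "2 ^ j = 2 * h"
    using assms(1) by (metis gr0_implies_Suc neq0_conv power_Suc)
  then show ?thesis using assms dest_at_Suc_keep[OF assms(2)]
    unfolding pos_at_def by (simp add: max_def) presburger
qed

lemma pos_at_Suc_jump:
  assumes "j \<noteq> 0" "aligned (Suc c) j"
  shows "pos_at c j = int (Suc c)" "pos_at (Suc c) j = int (Suc c) + S_inc j"
proof -
  have "(2::int) \<le> 2 ^ j" using assms(1) by (cases j) auto
  then show "pos_at c j = int (Suc c)" "pos_at (Suc c) j = int (Suc c) + S_inc j"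
    using assms(1) dest_at_Suc_jump[OF assms]
    by (simp_all add: pos_at_def D_inc_def S_inc_def max_def)
qed

lemma pos_at_Suc_gt:
  assumes "j \<noteq> 0" "\<not> aligned (Suc c) j"
  shows "pos_at (Suc c) j > int (Suc c)"
  using dest_at_gt[OF assms(1), of c] dest_at_eq_Suc_imp_aligned[OF assms(1), of c]
    dest_at_Suc_keep[OF assms(2)] pos_at_ge_dest_at[of "Suc c" j] assms(2)
  by linarith

section \<open>One step of the procedure on a closed-form state\<close>

text \<open>Positions after the walking phase (ii) of step c + 1: the pebble whose
  Destination is c + 1 has arrived there, all others already have their new values.\<close>
definition walked :: "nat \<Rightarrow> nat \<Rightarrow> int option" where
  "walked c j = Some (if j \<noteq> 0 \<and> aligned (Suc c) j then int (Suc c) else pos_at (Suc c) j)"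

lemma walk_state_at:
  "(\<lambda>j. if Some (pos_at c j) \<noteq> Some (dest_at c j)
        then map_option (\<lambda>p. p - 2) (Some (pos_at c j)) else Some (pos_at c j)) = walked c"
proof
  fix j
  consider "j = 0" | "j \<noteq> 0" "aligned (Suc c) j" | "j \<noteq> 0" "\<not> aligned (Suc c) j"
    by blast
  then show "(if Some (pos_at c j) \<noteq> Some (dest_at c j)
        then map_option (\<lambda>p. p - 2) (Some (pos_at c j)) else Some (pos_at c j)) = walked c j"
  proof cases
    case 1
    then show ?thesis by (simp add: walked_def pos_at_def dest_at_def)
  next
    case 2
    then show ?thesis using pos_at_Suc_jump dest_at_Suc_jump by (simp add: walked_def)
  next
    case 3
    then show ?thesis using pos_at_Suc_keep[OF 3] by (auto simp: walked_def)
  qed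
qed

lemma first_pebble_eqI:
  assumes "j0 \<in> {1..k}" "pos j0 = Some a"
    and "\<And>i. i \<in> {1..k} \<Longrightarrow> i \<noteq> j0 \<Longrightarrow> \<exists>b. pos i = Some b \<and> a < b"
  shows "first_pebble k pos = j0"
  unfolding first_pebble_def
proof (rule Least_equality)
  show "j0 \<in> {1..k} \<and> (\<forall>i\<in>{1..k}. pos_le (pos j0) (pos i))"
    using assms by (fastforce simp: pos_le_def)
next
  fix y assume y: "y \<in> {1..k} \<and> (\<forall>i\<in>{1..k}. pos_le (pos y) (pos i))"
  show "j0 \<le> y"
  proof (rule ccontr)
    assume "\<not> j0 \<le> y"
    then obtain b where "pos y = Some b" "a < b" using assms(3) y by fastforce
    moreover have "pos_le (pos y) (pos j0)" using y assms(1) by blast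
    ultimately show False using assms(2) by (simp add: pos_le_def)
  qed
qed

lemma first_pebble_walked:
  assumes "aligned (Suc c) j0" "j0 \<in> {1..k}"
  shows "first_pebble k (walked c) = j0"
proof (rule first_pebble_eqI[OF assms(2)])
  show "walked c j0 = Some (int (Suc c))" using assms by (simp add: walked_def)
  fix i assume "i \<in> {1..k}" "i \<noteq> j0"
  then have "i \<noteq> 0" "\<not> aligned (Suc c) i" using aligned_unique assms(1) by auto
  then show "\<exists>b. walked c i = Some b \<and> int (Suc c) < b"
    using pos_at_Suc_gt by (simp add: walked_def)
qed

text \<open>An odd step only moves pebbles: no odd number is j-aligned for j \<ge> 1.\<close>
lemma peb_step_odd:
  assumes "c < 2 ^ k" "odd (Suc c)"
  shows "peb_step k (state_at c) = state_at (Suc c)"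
proof -
  have aligned_iff: "aligned (Suc c) j \<longleftrightarrow> j = 0" for j
    using aligned_0_iff_odd aligned_unique assms(2) by blast
  have "peb_step k (state_at c) = (Suc c, walked c, \<lambda>j. Some (dest_at c j))"
    using assms unfolding peb_step_def state_at_def
    by (simp only: prod.case walk_state_at Let_def) simp
  moreover have "walked c = (\<lambda>j. Some (pos_at (Suc c) j))"
    by (rule ext) (simp add: walked_def aligned_iff)
  moreover have "dest_at c = dest_at (Suc c)"
  proof (rule ext)
    fix j
    show "dest_at c j = dest_at (Suc c) j"
      using aligned_iff[of j] dest_at_Suc_keep[of c j] by (cases "j = 0") (simp_all add: dest_at_def)
  qed
  ultimately show ?thesis by (simp add: state_at_def)
qed

lemma walked_backward_move:
  assumes "j0 \<noteq> 0" "aligned (Suc c) j0"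
  shows "(walked c)(j0 := Some (int (Suc c) + S_inc j0)) = (\<lambda>j. Some (pos_at (Suc c) j))"
proof (rule ext)
  fix j
  have "j \<noteq> j0 \<Longrightarrow> \<not> aligned (Suc c) j" using aligned_unique assms(2) by metis
  then show "((walked c)(j0 := Some (int (Suc c) + S_inc j0))) j = Some (pos_at (Suc c) j)"
    using pos_at_Suc_jump(2)[OF assms]
    by (cases "j = j0") (auto simp: walked_def)
qed

lemma dest_backward_move:
  assumes "j0 \<noteq> 0" "aligned (Suc c) j0"
  shows "(\<lambda>j. Some (dest_at c j))(j0 := Some (int (Suc c) + D_inc j0))
      = (\<lambda>j. Some (dest_at (Suc c) j))"
proof (rule ext)
  fix j
  have "j \<noteq> j0 \<Longrightarrow> \<not> aligned (Suc c) j" using aligned_unique assms(2) by metis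
  then show "((\<lambda>j. Some (dest_at c j))(j0 := Some (int (Suc c) + D_inc j0))) j
      = Some (dest_at (Suc c) j)"
    using dest_at_Suc_keep[of c j] dest_at_Suc_jump(2)[OF assms]
    by (cases "j = j0") auto
qed

lemma peb_step_even:
  assumes "c < 2 ^ k" "even (Suc c)" "aligned (Suc c) j0" "j0 \<le> k"
  shows "peb_step k (state_at c) =
    (if int (Suc c) + D_inc j0 > 2 ^ k
     then (Suc c, (\<lambda>j. Some (pos_at (Suc c) j))(j0 := None),
                  (\<lambda>j. Some (dest_at (Suc c) j))(j0 := None))
     else state_at (Suc c))"
proof -
  have j0: "j0 \<noteq> 0"
  proof
    assume "j0 = 0"
    then show False using assms(2,3) aligned_0_iff_odd by simp
  qed
  have first: "first_pebble k (walked c) = j0"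
    using assms(3,4) j0 by (intro first_pebble_walked) auto
  have pos_j0: "pos_at c j0 = int (Suc c)" and dest_j0: "dest_at c j0 = int (Suc c)"
    using pos_at_Suc_jump(1) dest_at_Suc_jump(1) j0 assms(3) by blast+
  have step: "peb_step k (state_at c) =
    (if int (Suc c) + D_inc j0 > 2 ^ k
     then (Suc c, (walked c)(j0 := None), (\<lambda>j. Some (dest_at c j))(j0 := None))
     else (Suc c, (walked c)(j0 := Some (int (Suc c) + S_inc j0)),
                  (\<lambda>j. Some (dest_at c j))(j0 := Some (int (Suc c) + D_inc j0))))"
    using assms(1,2) unfolding peb_step_def state_at_def
    by (simp only: prod.case walk_state_at Let_def)
      (simp only: first pos_j0 dest_j0 option.map, simp del: fun_upd_apply)
  note moved = walked_backward_move[OF j0 assms(3)] dest_backward_move[OF j0 assms(3)]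
  have discarded: "(walked c)(j0 := None) = (\<lambda>j. Some (pos_at (Suc c) j))(j0 := None)"
    "(\<lambda>j. Some (dest_at c j))(j0 := None) = (\<lambda>j. Some (dest_at (Suc c) j))(j0 := None)"
    using moved by (metis fun_upd_upd)+
  show ?thesis using moved discarded unfolding step by (simp add: state_at_def)
qed

section \<open>The run up to time n/2\<close>

text \<open>The initial state is the closed-form state at time 0 (Destination 2^j is the
  least j-aligned number above 0).\<close>
lemma run_0: "run k 0 = state_at 0"
proof -
  have dest_0: "dest_at 0 j = 2 ^ j" for j by (simp add: dest_at_def)
  then have "pos_at 0 j = 2 ^ j" for j by (simp add: pos_at_def)
  with dest_0 show ?thesis by (simp add: run_def init_state_def state_at_def)
qed

lemma run_Suc: "run k (Suc c) = peb_step k (run k c)"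
  by (simp add: run_def)

lemma half_twice: "k \<ge> 1 \<Longrightarrow> (2::nat) ^ (k - 1) + 2 ^ (k - 1) = 2 ^ k"
  by (cases k) auto

lemma aligned_before_half:
  assumes "k \<ge> 2" "0 < m" "m < 2 ^ (k - 1)" "aligned m j"
  shows "j + 1 < k" "int m + D_inc j \<le> 2 ^ k"
proof -
  have "(2::nat) ^ j < 2 ^ (k - 1)" using aligned_le[OF assms(2,4)] assms(3) by linarith
  then have "j + 1 \<le> k - 1" by simp
  then show "j + 1 < k" using assms(1) by linarith
  have "(2::nat) ^ (j + 1) \<le> 2 ^ (k - 1)" using \<open>j + 1 \<le> k - 1\<close> by (rule power_increasing) simp
  then have "m + 2 ^ (j + 1) \<le> 2 ^ k" using assms(1,3) half_twice[of k] by linarith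
  then have "int (m + 2 ^ (j + 1)) \<le> 2 ^ k" by (metis of_nat_le_iff of_nat_numeral of_nat_power)
  then show "int m + D_inc j \<le> 2 ^ k" by (simp add: D_inc_def)
qed

text \<open>Before time n/2 the run follows the closed form: no backward move overflows.\<close>
lemma run_eq_state_at:
  assumes "k \<ge> 2" "c < 2 ^ (k - 1)"
  shows "run k c = state_at c"
  using assms(2)
proof (induction c)
  case 0
  then show ?case using run_0 by simp
next
  case (Suc c)
  have c_lt: "c < 2 ^ k" using Suc.prems half_twice[of k] assms(1) by linarith
  have IH: "run k c = state_at c" using Suc by simp
  show ?case
  proof (cases "even (Suc c)")
    case False
    then show ?thesis using peb_step_odd[OF c_lt False] IH run_Suc by simp
  next
    case True
    obtain j0 where al: "aligned (Suc c) j0" using aligned_exists by blast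
    note bounds = aligned_before_half[OF assms(1) zero_less_Suc Suc.prems al]
    have "j0 \<le> k" using bounds(1) by simp
    then show ?thesis using peb_step_even[OF c_lt True al] bounds(2) IH run_Suc by simp
  qed
qed

lemma run_half:
  assumes "k \<ge> 2"
  shows "run k (2 ^ (k - 1)) = (2 ^ (k - 1), (\<lambda>j. Some (pos_at (2 ^ (k - 1)) j))(k - 1 := None),
            (\<lambda>j. Some (dest_at (2 ^ (k - 1)) j))(k - 1 := None))"
proof -
  define c where "c = 2 ^ (k - 1) - (1::nat)"
  have Suc_c: "Suc c = 2 ^ (k - 1)" unfolding c_def by simp
  have c_lt: "c < 2 ^ k" using Suc_c half_twice[of k] assms by linarith
  have even: "even (Suc c)" using Suc_c assms by (cases k) auto
  have al: "aligned (Suc c) (k - 1)"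
    using Suc_c half_twice[of k] assms by (simp add: aligned_def)
  have "int (Suc c) + D_inc (k - 1) = 2 ^ (k - 1) + 2 ^ k"
    using Suc_c assms by (simp add: D_inc_def)
  then have overflow: "int (Suc c) + D_inc (k - 1) > 2 ^ k" by simp
  have "c < 2 ^ (k - 1)" using Suc_c by simp
  then have "run k (Suc c) = peb_step k (state_at c)"
    by (simp only: run_Suc run_eq_state_at[OF assms])
  then show ?thesis unfolding Suc_c[symmetric] using peb_step_even[OF c_lt even al] overflow by simp
qed

theorem fact5:
  fixes k :: nat
  assumes "k \<ge> 2"
  shows "\<forall>j\<in>{1..k}. (\<exists>t\<le>2 ^ k div 2. discarded k t j) \<longleftrightarrow> j = k - 1"
proof
  fix j assume "j \<in> {1..k}"
  have half: "(2::nat) ^ k div 2 = 2 ^ (k - 1)" using assms by (cases k) auto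
  have before: "\<not> discarded k t j" if "t < 2 ^ (k - 1)" for t
    using run_eq_state_at[OF assms that] by (simp add: discarded_def state_at_def)
  have at_half: "discarded k (2 ^ (k - 1)) j \<longleftrightarrow> j = k - 1"
    using run_half[OF assms] by (simp add: discarded_def)
  show "(\<exists>t\<le>2 ^ k div 2. discarded k t j) \<longleftrightarrow> j = k - 1"
  proof
    assume "\<exists>t\<le>2 ^ k div 2. discarded k t j"
    then obtain t where "t \<le> 2 ^ (k - 1)" "discarded k t j" unfolding half by blast
    with before have "discarded k (2 ^ (k - 1)) j" by (metis le_less)
    with at_half show "j = k - 1" by blast
  next
    assume "j = k - 1"
    with at_half show "\<exists>t\<le>2 ^ k div 2. discarded k t j" unfolding half by blast
  qed
qed

end
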